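(* Let $D$ be a domain in $\mathbb{C}^n$, let $k\ge 0$ be an integer, and let $c>0$ and $\alpha>1$ be constants. Then the family $$\mathcal{F}=\left\{f\in\mathcal{H}(D):\ \sup_{\|v\|=1}\frac{|(D^kf(z),v)|}{1+|f(z)|^{\alpha}}>c\ \text{ for all } z\in D\right\}$$ is normal in $D$.
   Context: $\mathcal{H}(D)$ is the set of holomorphic functions $D\to\mathbb{C}$. $D^k$ denotes the operator $\left(\frac{\partial^k}{\partial z_1^k},\dots,\frac{\partial^k}{\partial z_n^k}\right)$ (for $k=0$, each component is the identity), and $(D^kf(z),v)=\sum_{j=1}^n \frac{\partial^k f}{\partial z_j^k}(z)\,v_j$ for $v=(v_1,\dots,v_n)\in\mathbb{C}^n$; the supremum is over $v\in\mathbb{C}^n$ with Euclidean norm $1$. A family is normal in $D$ if every sequence in it has a subsequence converging locally uniformly in $D$. *)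

theory Defs
  imports "HOL-Analysis.Analysis"
begin

definition holomorphic_n :: "(complex ^ 'n \<Rightarrow> complex) \<Rightarrow> (complex ^ 'n) set \<Rightarrow> bool" where
  "holomorphic_n f D \<longleftrightarrow>
     (\<forall>z\<in>D. \<exists>c :: 'n \<Rightarrow> complex. (f has_derivative (\<lambda>h. \<Sum>j\<in>UNIV. c j * h $ j)) (at z))"

definition partial_n :: "'n \<Rightarrow> (complex ^ 'n \<Rightarrow> complex) \<Rightarrow> complex ^ 'n \<Rightarrow> complex" where
  "partial_n j f z = deriv (\<lambda>w. f (\<chi> i. if i = j then w else z $ i)) (z $ j)"

definition partial_pow :: "'n \<Rightarrow> nat \<Rightarrow> (complex ^ 'n \<Rightarrow> complex) \<Rightarrow> complex ^ 'n \<Rightarrow> complex" where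
  "partial_pow j k f = (partial_n j ^^ k) f"

definition Dk_sup :: "nat \<Rightarrow> (complex ^ 'n \<Rightarrow> complex) \<Rightarrow> complex ^ 'n \<Rightarrow> real" where
  "Dk_sup k f z = (SUP v\<in>{v :: complex ^ 'n. norm v = 1}. cmod (\<Sum>j\<in>UNIV. partial_pow j k f z * v $ j))"

definition normal_family :: "(complex ^ 'n \<Rightarrow> complex) set \<Rightarrow> (complex ^ 'n) set \<Rightarrow> bool" where
  "normal_family F D \<longleftrightarrow>
     (\<forall>f :: nat \<Rightarrow> (complex ^ 'n \<Rightarrow> complex). (\<forall>m. f m \<in> F) \<longrightarrow>
        (\<exists>r g. strict_mono r \<and>
           (\<forall>K. K \<subseteq> D \<and> compact K \<longrightarrow> uniform_limit K (\<lambda>m. f (r m)) g sequentially)))"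

end

(* Fix a compact set K in D and a closed neighbourhood L = {z. infdist z K <= delta} inside D.
   For f in the family, the weighted function |f|^(alpha - 1) * (delta - infdist z K)^k attains
   its maximum on L at some point p.  Maximality bounds |f| on the ball of radius
   r = (delta - infdist p K) / 2 around p by 2^(k/(alpha - 1)) |f p|, so the Cauchy estimates
   bound the k-th partial derivatives at p by a multiple of |f p| / r^k; against the defining
   inequality, which makes them dominate c |f p|^alpha, this bounds the maximum, and hence |f|
   on K, independently of f.  A locally uniformly bounded family of holomorphic functions is
   normal: Cauchy estimates along complex lines make it equicontinuous, and Arzela-Ascoli on
   an exhaustion of D by compact sets, combined with a diagonal argument, yields a locally
   uniformly convergent subsequence. *)

theory Submission
  imports Defs "HOL-Complex_Analysis.Great_Picard"
begin

section \<open>Holomorphic functions along complex lines\<close>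

lemma norm_vector_scalar_mult: "norm (t *s u) = cmod t * norm (u :: complex ^ 'n)"
  by (simp add: norm_vec_def norm_mult L2_set_right_distrib)

lemma bounded_linear_vector_scalar_mult_left: "bounded_linear (\<lambda>t. t *s (u :: complex ^ 'n))"
  by (rule bounded_linear_intro[where K = "norm u"])
     (auto simp: norm_vector_scalar_mult vec_eq_iff)

lemma holomorphic_n_on_line:
  assumes f: "holomorphic_n f D" and line: "\<And>t. t \<in> S \<Longrightarrow> p + t *s u \<in> D"
  shows "(\<lambda>t. f (p + t *s u)) holomorphic_on S"
  unfolding holomorphic_on_def
proof
  fix t assume "t \<in> S"
  then obtain c where c: "(f has_derivative (\<lambda>h. \<Sum>j\<in>UNIV. c j * h $ j)) (at (p + t *s u))"
    using f line unfolding holomorphic_n_def by blast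
  have line_deriv: "((\<lambda>t. p + t *s u) has_derivative (\<lambda>h. h *s u)) (at t)"
    using bounded_linear_vector_scalar_mult_left
    by (auto intro!: derivative_eq_intros bounded_linear_imp_has_derivative)
  have linear_part: "(\<lambda>h. \<Sum>j\<in>UNIV. c j * h $ j) \<circ> (\<lambda>h. h *s u) = (*) (\<Sum>j\<in>UNIV. c j * u $ j)"
    by (simp add: fun_eq_iff sum_distrib_left mult_ac)
  have "((\<lambda>t. f (p + t *s u)) has_derivative (*) (\<Sum>j\<in>UNIV. c j * u $ j)) (at t)"
    using diff_chain_at[OF line_deriv c] unfolding linear_part by (simp add: o_def)
  then show "(\<lambda>t. f (p + t *s u)) field_differentiable at t within S"
    unfolding field_differentiable_def has_field_derivative_def
    by (blast intro: has_derivative_at_withinI)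
qed

lemma holomorphic_n_imp_continuous_on: "holomorphic_n f D \<Longrightarrow> continuous_on D f"
  unfolding holomorphic_n_def
  by (meson continuous_at_imp_continuous_on has_derivative_continuous)

lemma norm_axis_cart: "norm (axis j x) = norm (x :: 'a :: real_normed_vector)"
  by (simp add: norm_vec_def L2_set_def axis_def if_distrib[where f = norm]
      if_distrib[where f = "\<lambda>x. x ^ 2"] cong: if_cong)

lemma dist_coordinate_slice:
  fixes z :: "complex ^ 'n"
  shows "dist (\<chi> i. if i = j then w else z $ i) z = cmod (w - z $ j)"
proof -
  have "(\<chi> i. if i = j then w else z $ i) - z = (w - z $ j) *s axis j 1"
    by (simp add: vec_eq_iff axis_def)
  then show ?thesis
    by (simp only: dist_norm norm_vector_scalar_mult norm_axis_cart norm_one mult_1_right)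
qed

lemma partial_pow_eq_higher_deriv:
  "partial_pow j k f z = (deriv ^^ k) (\<lambda>w. f (\<chi> i. if i = j then w else z $ i)) (z $ j)"
proof (induction k arbitrary: z)
  case 0
  have "(\<chi> i. if i = j then z $ j else z $ i) = z"
    by (simp add: vec_eq_iff)
  then show ?case
    by (simp add: partial_pow_def)
next
  case (Suc k)
  have slice: "(\<chi> i. if i = j then w' else (\<chi> i. if i = j then w else z $ i) $ i)
      = (\<chi> i. if i = j then w' else z $ i)" for w w'
    by (simp add: vec_eq_iff)
  have "partial_pow j (Suc k) f z = deriv (\<lambda>w. partial_pow j k f (\<chi> i. if i = j then w else z $ i)) (z $ j)"
    by (simp add: partial_pow_def partial_n_def)
  also have "\<dots> = deriv ((deriv ^^ k) (\<lambda>w. f (\<chi> i. if i = j then w else z $ i))) (z $ j)"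
    by (simp add: Suc.IH slice)
  finally show ?case
    by simp
qed

lemma Cauchy_inequality_partial_pow:
  fixes f :: "complex ^ 'n \<Rightarrow> complex"
  assumes f: "holomorphic_n f D" and ball: "cball z r \<subseteq> D" and "r > 0"
    and bound: "\<And>y. y \<in> cball z r \<Longrightarrow> cmod (f y) \<le> M"
  shows "cmod (partial_pow j k f z) \<le> fact k * M / r ^ k"
proof -
  define p where "p = (\<chi> i. if i = j then 0 else z $ i)"
  define g where "g = (\<lambda>w. f (\<chi> i. if i = j then w else z $ i))"
  have slice_eq_line: "(\<chi> i. if i = j then w else z $ i) = p + w *s axis j 1" for w
    by (auto simp: p_def vec_eq_iff axis_def)
  have slice_in_ball: "(\<chi> i. if i = j then w else z $ i) \<in> cball z r" if "w \<in> cball (z $ j) r" for w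
    using that dist_coordinate_slice[of j w z] by (simp add: dist_commute dist_norm)
  have hol: "g holomorphic_on cball (z $ j) r"
    unfolding g_def slice_eq_line
    by (rule holomorphic_n_on_line[OF f]) (metis slice_eq_line slice_in_ball ball subsetD)
  have "cmod ((deriv ^^ k) g (z $ j)) \<le> fact k * M / r ^ k"
  proof (rule Cauchy_inequality)
    show "g holomorphic_on ball (z $ j) r"
      using hol ball_subset_cball by (rule holomorphic_on_subset)
    show "continuous_on (cball (z $ j) r) g"
      using hol by (rule holomorphic_on_imp_continuous_on)
  next
    fix w assume "cmod (z $ j - w) = r"
    then show "cmod (g w) \<le> M"
      unfolding g_def by (intro bound slice_in_ball) (simp add: dist_norm)
  qed (rule \<open>r > 0\<close>)
  then show ?thesis
    by (simp add: partial_pow_eq_higher_deriv g_def)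
qed

section \<open>Local uniform boundedness of the family\<close>

lemma Dk_sup_le_sum_norm_partial_pow:
  fixes f :: "complex ^ 'n \<Rightarrow> complex"
  shows "Dk_sup k f z \<le> (\<Sum>j\<in>UNIV. cmod (partial_pow j k f z))"
  unfolding Dk_sup_def
proof (rule cSUP_least)
  have "norm (axis (undefined :: 'n) (1::complex)) = 1"
    by (simp add: norm_axis_cart)
  then show "{v :: complex ^ 'n. norm v = 1} \<noteq> {}"
    by blast
next
  fix v :: "complex ^ 'n" assume "v \<in> {v. norm v = 1}"
  then have "cmod (v $ j) \<le> 1" for j
    by (intro order_trans[OF Finite_Cartesian_Product.norm_nth_le]) simp
  then have term_bound: "cmod (partial_pow j k f z * v $ j) \<le> cmod (partial_pow j k f z)" for j
    by (simp add: norm_mult mult_left_le)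
  show "cmod (\<Sum>j\<in>UNIV. partial_pow j k f z * v $ j) \<le> (\<Sum>j\<in>UNIV. cmod (partial_pow j k f z))"
    by (intro order_trans[OF norm_sum sum_mono] term_bound)
qed

lemma sum_norm_partial_pow_gt_if_Dk_sup_gt:
  fixes f :: "complex ^ 'n \<Rightarrow> complex"
  assumes "Dk_sup k f z / (1 + cmod (f z) powr \<alpha>) > c"
  shows "c * (1 + cmod (f z) powr \<alpha>) < (\<Sum>j\<in>UNIV. cmod (partial_pow j k f z))"
proof -
  have "c * (1 + cmod (f z) powr \<alpha>) < Dk_sup k f z"
    using assms by (simp add: less_divide_eq add_pos_nonneg)
  also have "\<dots> \<le> (\<Sum>j\<in>UNIV. cmod (partial_pow j k f z))"
    by (rule Dk_sup_le_sum_norm_partial_pow)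
  finally show ?thesis .
qed

lemma powr_bound_of_growth:
  fixes x c M \<alpha> :: real
  assumes "c > 0" "x \<ge> 0" and growth: "c * (1 + x powr \<alpha>) < M * x"
  shows "x powr (\<alpha> - 1) < M / c"
proof -
  have "x > 0"
    using assms by (cases "x = 0") auto
  have "x powr \<alpha> = x * x powr (\<alpha> - 1)"
    using powr_add[of x 1 "\<alpha> - 1"] \<open>x > 0\<close> by simp
  then have "x * (c * x powr (\<alpha> - 1)) < x * M"
    using growth \<open>c > 0\<close> by (simp add: algebra_simps)
  then show ?thesis
    using \<open>x > 0\<close> \<open>c > 0\<close> by (simp add: pos_less_divide_eq mult.commute)
qed

lemma le_powr_inverse_of_powr_le:
  fixes x a M :: real
  assumes "x \<ge> 0" "a > 0" "x powr a \<le> M"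
  shows "x \<le> M powr (1 / a)"
proof (cases "x = 0")
  case False
  then have "x = (x powr a) powr (1 / a)"
    using assms by (simp add: powr_powr)
  also have "\<dots> \<le> M powr (1 / a)"
    using assms by (intro powr_mono2) auto
  finally show ?thesis .
qed simp

lemma bound_at_weighted_maximum:
  fixes f :: "complex ^ 'n \<Rightarrow> complex"
  assumes f: "holomorphic_n f D" and "c > 0" "\<alpha> > 1" "r > 0" and ball: "cball p r \<subseteq> D"
    and growth: "c * (1 + cmod (f p) powr \<alpha>) < (\<Sum>j\<in>UNIV. cmod (partial_pow j k f p))"
    and weighted_max: "\<And>y. y \<in> cball p r \<Longrightarrow>
          cmod (f y) powr (\<alpha> - 1) * r ^ k \<le> cmod (f p) powr (\<alpha> - 1) * (2 * r) ^ k"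
  shows "cmod (f p) powr (\<alpha> - 1) * (2 * r) ^ k
           < real CARD('n) * fact k * 2 powr (k / (\<alpha> - 1)) * 2 ^ k / c"
proof -
  define x where "x = cmod (f p)"
  define A where "A = 2 powr (k / (\<alpha> - 1))"
  have doubling: "cmod (f y) \<le> x * A" if "y \<in> cball p r" for y
  proof -
    have "cmod (f y) powr (\<alpha> - 1) * r ^ k \<le> (x powr (\<alpha> - 1) * 2 ^ k) * r ^ k"
      using weighted_max[OF that] by (simp add: x_def power_mult_distrib mult_ac)
    then have "cmod (f y) \<le> (x powr (\<alpha> - 1) * 2 ^ k) powr (1 / (\<alpha> - 1))"
      using \<open>r > 0\<close> \<open>\<alpha> > 1\<close> by (intro le_powr_inverse_of_powr_le) auto
    also have "\<dots> = x * A"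
      using \<open>\<alpha> > 1\<close>
      by (simp add: x_def A_def powr_mult powr_powr powr_realpow[symmetric] mult_ac)
    finally show ?thesis .
  qed
  have "(\<Sum>j\<in>UNIV. cmod (partial_pow j k f p)) \<le> (\<Sum>(j::'n)\<in>UNIV. fact k * (x * A) / r ^ k)"
    using Cauchy_inequality_partial_pow[OF f ball \<open>r > 0\<close> doubling] by (intro sum_mono)
  then have "c * (1 + x powr \<alpha>) < (real CARD('n) * fact k * A / r ^ k) * x"
    using growth by (simp add: x_def mult_ac)
  then have "x powr (\<alpha> - 1) < real CARD('n) * fact k * A / r ^ k / c"
    using \<open>c > 0\<close> by (intro powr_bound_of_growth) (auto simp: x_def)
  then have "x powr (\<alpha> - 1) * (2 ^ k * r ^ k) < real CARD('n) * fact k * A * 2 ^ k / c"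
    using \<open>r > 0\<close> \<open>c > 0\<close> by (simp add: field_simps)
  then show ?thesis
    by (simp add: x_def A_def power_mult_distrib)
qed

lemma weighted_norm_bound_at_maximum:
  fixes f :: "complex ^ 'n \<Rightarrow> complex"
  assumes f: "holomorphic_n f D" and "c > 0" "\<alpha> > 1" "k > 0"
    and LD: "{y. infdist y K \<le> \<delta>} \<subseteq> D" and "infdist p K \<le> \<delta>"
    and growth: "c * (1 + cmod (f p) powr \<alpha>) < (\<Sum>j\<in>UNIV. cmod (partial_pow j k f p))"
    and max: "\<And>y. infdist y K \<le> \<delta> \<Longrightarrow>
      cmod (f y) powr (\<alpha> - 1) * (\<delta> - infdist y K) ^ k \<le> cmod (f p) powr (\<alpha> - 1) * (\<delta> - infdist p K) ^ k"
  shows "cmod (f p) powr (\<alpha> - 1) * (\<delta> - infdist p K) ^ k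
           \<le> real CARD('n) * fact k * 2 powr (k / (\<alpha> - 1)) * 2 ^ k / c"
proof (cases "infdist p K = \<delta>")
  case True
  then show ?thesis
    using \<open>k > 0\<close> \<open>c > 0\<close> by (simp add: power_0_left)
next
  case False
  define r where "r = (\<delta> - infdist p K) / 2"
  have "r > 0"
    using False \<open>infdist p K \<le> \<delta>\<close> by (simp add: r_def)
  have two_r: "2 * r = \<delta> - infdist p K"
    by (simp add: r_def)
  have near_p: "infdist y K \<le> \<delta> \<and> r \<le> \<delta> - infdist y K" if "y \<in> cball p r" for y
  proof -
    have "infdist y K \<le> infdist p K + r"
      using that infdist_triangle[of y K p] by (simp add: dist_commute)
    then show ?thesis
      using two_r \<open>r > 0\<close> by auto
  qed
  have "cmod (f p) powr (\<alpha> - 1) * (\<delta> - infdist p K) ^ k = cmod (f p) powr (\<alpha> - 1) * (2 * r) ^ k"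
    by (simp only: two_r)
  also have "\<dots> < real CARD('n) * fact k * 2 powr (k / (\<alpha> - 1)) * 2 ^ k / c"
  proof (rule bound_at_weighted_maximum[OF f \<open>c > 0\<close> \<open>\<alpha> > 1\<close> \<open>r > 0\<close> _ growth])
    show "cball p r \<subseteq> D"
      using near_p LD by blast
    show "cmod (f y) powr (\<alpha> - 1) * r ^ k \<le> cmod (f p) powr (\<alpha> - 1) * (2 * r) ^ k"
      if "y \<in> cball p r" for y
    proof -
      have "cmod (f y) powr (\<alpha> - 1) * r ^ k \<le> cmod (f y) powr (\<alpha> - 1) * (\<delta> - infdist y K) ^ k"
        using near_p[OF that] \<open>r > 0\<close> by (intro mult_left_mono power_mono) auto
      also have "\<dots> \<le> cmod (f p) powr (\<alpha> - 1) * (\<delta> - infdist p K) ^ k"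
        using max near_p[OF that] by blast
      finally show ?thesis
        by (simp only: two_r)
    qed
  qed
  finally show ?thesis
    by simp
qed

lemma uniform_bound_on_compact_pos_order:
  fixes D K :: "(complex ^ 'n) set"
  assumes D: "open D" and K: "compact K" "K \<noteq> {}" "K \<subseteq> D" and "c > 0" "\<alpha> > 1" "k > 0"
  obtains B where "\<And>f z. holomorphic_n f D \<Longrightarrow>
      (\<And>z. z \<in> D \<Longrightarrow> c * (1 + cmod (f z) powr \<alpha>) < (\<Sum>j\<in>UNIV. cmod (partial_pow j k f z))) \<Longrightarrow>
      z \<in> K \<Longrightarrow> cmod (f z) \<le> B"
proof -
  obtain \<delta> where "\<delta> > 0" and LD: "{z. infdist z K \<le> \<delta>} \<subseteq> D"
    using compact_in_open_separated[OF K(2,1) D K(3)] by blast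
  define L where "L = {z. infdist z K \<le> \<delta>}"
  define C where "C = real CARD('n) * fact k * 2 powr (k / (\<alpha> - 1)) * 2 ^ k / c"
  have weighted_bound: "cmod (f z) powr (\<alpha> - 1) * \<delta> ^ k \<le> C"
    if f: "holomorphic_n f D"
      and growth: "\<And>z. z \<in> D \<Longrightarrow> c * (1 + cmod (f z) powr \<alpha>) < (\<Sum>j\<in>UNIV. cmod (partial_pow j k f z))"
      and "z \<in> K" for f z
  proof -
    define \<psi> where "\<psi> y = cmod (f y) powr (\<alpha> - 1) * (\<delta> - infdist y K) ^ k" for y
    have "continuous_on L f"
      using holomorphic_n_imp_continuous_on[OF f] LD continuous_on_subset by (auto simp: L_def)
    then have norm_powr: "continuous_on L (\<lambda>y. cmod (f y) powr (\<alpha> - 1))"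
      using \<open>\<alpha> > 1\<close> by (intro continuous_on_powr' continuous_intros) auto
    have "continuous_on L \<psi>"
      unfolding \<psi>_def by (intro continuous_on_mult[OF norm_powr] continuous_intros)
    moreover have "compact L" "z \<in> L"
      using compact_infdist_le[OF K(2,1) \<open>\<delta> > 0\<close>] \<open>z \<in> K\<close> \<open>\<delta> > 0\<close> by (simp_all add: L_def)
    ultimately obtain p where "p \<in> L" and max: "\<And>y. y \<in> L \<Longrightarrow> \<psi> y \<le> \<psi> p"
      using continuous_attains_sup[of L \<psi>] by blast
    have "\<psi> z \<le> \<psi> p"
      using max \<open>z \<in> L\<close> .
    also have "\<psi> p \<le> C"
      unfolding \<psi>_def C_def
      using weighted_norm_bound_at_maximum[OF f \<open>c > 0\<close> \<open>\<alpha> > 1\<close> \<open>k > 0\<close> LD] growth LD \<open>p \<in> L\<close> max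
      by (auto simp: L_def \<psi>_def)
    finally show ?thesis
      using \<open>z \<in> K\<close> by (simp add: \<psi>_def)
  qed
  show ?thesis
  proof (rule that)
    fix f z assume "holomorphic_n f D" "z \<in> K"
      and "\<And>z. z \<in> D \<Longrightarrow> c * (1 + cmod (f z) powr \<alpha>) < (\<Sum>j\<in>UNIV. cmod (partial_pow j k f z))"
    then have "cmod (f z) powr (\<alpha> - 1) \<le> C / \<delta> ^ k"
      using weighted_bound \<open>\<delta> > 0\<close> by (simp add: pos_le_divide_eq)
    then show "cmod (f z) \<le> (C / \<delta> ^ k) powr (1 / (\<alpha> - 1))"
      using \<open>\<alpha> > 1\<close> by (intro le_powr_inverse_of_powr_le) auto
  qed
qed

lemma uniform_bound_on_compact:
  fixes D K :: "(complex ^ 'n) set"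
  assumes D: "open D" and K: "compact K" "K \<subseteq> D" and "c > 0" "\<alpha> > 1"
  obtains B where "\<And>f z. holomorphic_n f D \<Longrightarrow>
      (\<And>z. z \<in> D \<Longrightarrow> c * (1 + cmod (f z) powr \<alpha>) < (\<Sum>j\<in>UNIV. cmod (partial_pow j k f z))) \<Longrightarrow>
      z \<in> K \<Longrightarrow> cmod (f z) \<le> B"
proof (cases "k = 0")
  case True
  show thesis
  proof (rule that)
    fix f z assume "z \<in> K"
      and growth: "\<And>z. z \<in> D \<Longrightarrow> c * (1 + cmod (f z) powr \<alpha>) < (\<Sum>j\<in>UNIV. cmod (partial_pow j k f z))"
    then have "c * (1 + cmod (f z) powr \<alpha>) < real CARD('n) * cmod (f z)"
      using K(2) True by (force simp: partial_pow_def)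
    then have "cmod (f z) powr (\<alpha> - 1) \<le> real CARD('n) / c"
      using \<open>c > 0\<close> by (intro less_imp_le powr_bound_of_growth) auto
    then show "cmod (f z) \<le> (real CARD('n) / c) powr (1 / (\<alpha> - 1))"
      using \<open>\<alpha> > 1\<close> by (intro le_powr_inverse_of_powr_le) auto
  qed
next
  case False
  show thesis
  proof (cases "K = {}")
    case False
    with uniform_bound_on_compact_pos_order[OF D K(1) _ K(2) \<open>c > 0\<close> \<open>\<alpha> > 1\<close>] \<open>k \<noteq> 0\<close> that
    show thesis by blast
  qed (use that in blast)
qed

section \<open>Montel's theorem in several variables\<close>

lemma holomorphic_norm_diff_le:
  fixes \<phi> :: "complex \<Rightarrow> complex"
  assumes hol: "\<phi> holomorphic_on cball 0 (1 + \<rho>)" and "\<rho> > 0"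
    and bound: "\<And>t. t \<in> cball 0 (1 + \<rho>) \<Longrightarrow> cmod (\<phi> t) \<le> B"
  shows "cmod (\<phi> 1 - \<phi> 0) \<le> B / \<rho>"
proof -
  have derivative_bound: "cmod (deriv \<phi> t) \<le> B / \<rho>" if "t \<in> cball 0 1" for t
  proof -
    have sub: "cball t \<rho> \<subseteq> cball 0 (1 + \<rho>)"
    proof
      fix y assume "y \<in> cball t \<rho>"
      then show "y \<in> cball 0 (1 + \<rho>)"
        using that norm_triangle_sub[of y t] by (simp add: dist_norm norm_minus_commute)
    qed
    have "cmod ((deriv ^^ 1) \<phi> t) \<le> fact 1 * B / \<rho> ^ 1"
    proof (rule Cauchy_inequality)
      show "\<phi> holomorphic_on ball t \<rho>"
        using hol sub ball_subset_cball by (blast intro: holomorphic_on_subset)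
      show "continuous_on (cball t \<rho>) \<phi>"
        using hol sub by (blast intro: holomorphic_on_subset holomorphic_on_imp_continuous_on)
      show "cmod (\<phi> y) \<le> B" if "cmod (t - y) = \<rho>" for y
        using that sub by (intro bound) (auto simp: dist_norm)
    qed (rule \<open>\<rho> > 0\<close>)
    then show ?thesis
      by simp
  qed
  have "cmod (\<phi> 1 - \<phi> 0) \<le> B / \<rho> * cmod (1 - 0)"
  proof (rule field_differentiable_bound[OF convex_cball _ derivative_bound])
    show "(\<phi> has_field_derivative deriv \<phi> t) (at t within cball 0 1)" if "t \<in> cball 0 1" for t
      using that \<open>\<rho> > 0\<close>
      by (intro holomorphic_derivI[of _ "ball 0 (1 + \<rho>)"] holomorphic_on_subset[OF hol]) auto
  qed auto
  then show ?thesis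
    by simp
qed

lemma holomorphic_n_norm_diff_le:
  fixes f :: "complex ^ 'n \<Rightarrow> complex"
  assumes f: "holomorphic_n f D" and ball: "cball x R \<subseteq> D"
    and bound: "\<And>z. z \<in> cball x R \<Longrightarrow> cmod (f z) \<le> B" and "dist y x < R"
  shows "cmod (f y - f x) \<le> B * dist y x / (R - dist y x)"
proof (cases "y = x")
  case False
  define s where "s = dist y x"
  define \<rho> where "\<rho> = R / s - 1"
  have "s > 0" "s < R"
    using False \<open>dist y x < R\<close> by (auto simp: s_def)
  then have "\<rho> > 0"
    by (simp add: \<rho>_def)
  have on_line: "x + t *s (y - x) \<in> cball x R" if "t \<in> cball 0 (1 + \<rho>)" for t
  proof -
    have "x + t *s (y - x) - x = t *s (y - x)"
      by simp
    then have "dist (x + t *s (y - x)) x = cmod t * s"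
      by (simp only: dist_norm norm_vector_scalar_mult s_def)
    also have "\<dots> \<le> R"
      using that \<open>s > 0\<close> by (simp add: \<rho>_def pos_le_divide_eq)
    finally show ?thesis
      by (simp add: dist_commute)
  qed
  have "(\<lambda>t. f (x + t *s (y - x))) holomorphic_on cball 0 (1 + \<rho>)"
    using on_line ball by (intro holomorphic_n_on_line[OF f]) blast
  from holomorphic_norm_diff_le[OF this \<open>\<rho> > 0\<close>] on_line bound
  have "cmod (f y - f x) \<le> B / \<rho>"
    by simp
  also have "\<dots> = B * s / (R - s)"
    using \<open>s > 0\<close> by (simp add: \<rho>_def field_simps)
  finally show ?thesis
    by (simp add: s_def)
qed simp

lemma holomorphic_n_equicontinuous_at:
  fixes F :: "nat \<Rightarrow> complex ^ 'n \<Rightarrow> complex"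
  assumes S: "open S" and hol: "\<And>n. holomorphic_n (F n) S"
    and bounded: "\<And>K. compact K \<Longrightarrow> K \<subseteq> S \<Longrightarrow> \<exists>B. \<forall>n. \<forall>z\<in>K. cmod (F n z) \<le> B"
    and "x \<in> S" "e > 0"
  shows "\<exists>d>0. \<forall>n y. norm (x - y) < d \<longrightarrow> cmod (F n x - F n y) < e"
proof -
  obtain R where "R > 0" and ball: "cball x R \<subseteq> S"
    using S \<open>x \<in> S\<close> open_contains_cball by blast
  obtain B0 where B0: "\<And>n z. z \<in> cball x R \<Longrightarrow> cmod (F n z) \<le> B0"
    using bounded[OF compact_cball ball] by blast
  define B where "B = \<bar>B0\<bar> + 1"
  have "B > 0" and B: "\<And>n z. z \<in> cball x R \<Longrightarrow> cmod (F n z) \<le> B"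
    using B0 by (auto simp: B_def intro: order_trans[OF B0])
  define d where "d = min (R / 2) (e * R / (2 * B))"
  have "cmod (F n x - F n y) < e" if "norm (x - y) < d" for n y
  proof -
    define s where "s = dist y x"
    have "s < R / 2" "s < e * R / (2 * B)"
      using that by (auto simp: s_def d_def dist_norm norm_minus_commute)
    have "cmod (F n y - F n x) \<le> B * s / (R - s)"
      unfolding s_def using \<open>s < R / 2\<close> \<open>R > 0\<close>
      by (intro holomorphic_n_norm_diff_le[OF hol ball B]) (auto simp: s_def)
    also have "\<dots> \<le> B * s / (R / 2)"
      using \<open>s < R / 2\<close> \<open>B > 0\<close> \<open>R > 0\<close> by (intro divide_left_mono) (auto simp: s_def)
    also have "\<dots> < e"
      using \<open>s < e * R / (2 * B)\<close> \<open>B > 0\<close> \<open>R > 0\<close> by (simp add: field_simps)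
    finally show ?thesis
      by (simp add: norm_minus_commute)
  qed
  moreover have "d > 0"
    using \<open>R > 0\<close> \<open>B > 0\<close> \<open>e > 0\<close> by (simp add: d_def)
  ultimately show ?thesis
    by blast
qed

lemma uniformly_convergent_subsequence_on_compact:
  fixes F :: "nat \<Rightarrow> 'a::euclidean_space \<Rightarrow> 'b::{real_normed_vector,heine_borel}"
  assumes K: "compact K" and bound: "\<And>n x. x \<in> K \<Longrightarrow> norm (F n x) \<le> B"
    and equicont: "\<And>x e. x \<in> K \<Longrightarrow> e > 0 \<Longrightarrow>
                     \<exists>d>0. \<forall>n y. norm (x - y) < d \<longrightarrow> norm (F n x - F n y) < e"
  shows "\<exists>k g. strict_mono k \<and> uniform_limit K (F \<circ> k) g sequentially"
proof (rule Arzela_Ascoli[OF K, where \<F> = F and M = B])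
  show "norm (F n x) \<le> B" if "x \<in> K" for n x
    using bound that .
  show "\<exists>d>0. \<forall>n y. y \<in> K \<and> norm (x - y) < d \<longrightarrow> norm (F n x - F n y) < e"
    if "x \<in> K" "e > 0" for x e
    using equicont[OF that] by blast
next
  fix g and k :: "nat \<Rightarrow> nat" assume "strict_mono k"
    and conv: "\<And>e. 0 < e \<Longrightarrow> \<exists>N. \<forall>n x. n \<ge> N \<and> x \<in> K \<longrightarrow> norm (F (k n) x - g x) < e"
  have "uniform_limit K (F \<circ> k) g sequentially"
    unfolding uniform_limit_sequentially_iff dist_norm
  proof (intro allI impI)
    fix e :: real assume "e > 0"
    then obtain N where "\<forall>n x. n \<ge> N \<and> x \<in> K \<longrightarrow> norm (F (k n) x - g x) < e"
      using conv by blast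
    then show "\<exists>N. \<forall>n\<ge>N. \<forall>x\<in>K. norm ((F \<circ> k) n x - g x) < e"
      by auto
  qed
  with \<open>strict_mono k\<close> show ?thesis
    by blast
qed

lemma uniform_limit_eventual_subsequence:
  fixes F :: "nat \<Rightarrow> 'a \<Rightarrow> 'b::metric_space"
  assumes lim: "uniform_limit K (F \<circ> k1) g sequentially"
    and later: "\<And>j. N \<le> j \<Longrightarrow> \<exists>j'\<ge>j. k2 j = k1 j'"
  shows "uniform_limit K (F \<circ> k2) g sequentially"
  unfolding uniform_limit_sequentially_iff
proof (intro allI impI)
  fix e :: real assume "e > 0"
  then obtain M where "\<forall>n\<ge>M. \<forall>x\<in>K. dist ((F \<circ> k1) n x) (g x) < e"
    using lim unfolding uniform_limit_sequentially_iff by blast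
  then have M: "dist (F (k1 n) x) (g x) < e" if "n \<ge> M" "x \<in> K" for n x
    using that by simp
  have close: "dist (F (k2 n) x) (g x) < e" if n: "n \<ge> max N M" and "x \<in> K" for n x
  proof -
    obtain j' where "j' \<ge> n" "k2 n = k1 j'"
      using later[of n] n by auto
    then show ?thesis
      using M[of j' x] n \<open>x \<in> K\<close> by simp
  qed
  show "\<exists>M. \<forall>n\<ge>M. \<forall>x\<in>K. dist ((F \<circ> k2) n x) (g x) < e"
    using close by (intro exI[of _ "max N M"]) simp
qed

lemma uniform_limit_common_limit:
  fixes F :: "nat \<Rightarrow> 'a \<Rightarrow> 'b::metric_space"
  assumes G: "\<And>i. uniform_limit (C i) F (G i) sequentially"
  obtains g where "\<And>i. uniform_limit (C i) F g sequentially"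
proof
  define g where "g z = lim (\<lambda>n. F n z)" for z
  fix i
  have "G i z = g z" if "z \<in> C i" for z
    using tendsto_uniform_limitI[OF G that] unfolding g_def by (rule limI[symmetric])
  then have "uniform_limit (C i) F g sequentially \<longleftrightarrow> uniform_limit (C i) F (G i) sequentially"
    by (intro uniform_limit_cong') simp_all
  with G show "uniform_limit (C i) F g sequentially"
    by blast
qed

lemma locally_uniform_convergent_subsequence:
  fixes F :: "nat \<Rightarrow> 'a::euclidean_space \<Rightarrow> 'b::{real_normed_vector,heine_borel}"
  assumes S: "open S"
    and bounded: "\<And>K. compact K \<Longrightarrow> K \<subseteq> S \<Longrightarrow> \<exists>B. \<forall>n. \<forall>z\<in>K. norm (F n z) \<le> B"
    and equicont: "\<And>x e. x \<in> S \<Longrightarrow> e > 0 \<Longrightarrow>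
                     \<exists>d>0. \<forall>n y. norm (x - y) < d \<longrightarrow> norm (F n x - F n y) < e"
  obtains r g where "strict_mono r"
    "\<And>K. K \<subseteq> S \<Longrightarrow> compact K \<Longrightarrow> uniform_limit K (F \<circ> r) g sequentially"
proof -
  obtain C where C: "\<And>i. compact (C i)" "\<And>i. C i \<subseteq> S"
    and "\<And>i. C i \<subseteq> interior (C (Suc i))" "\<Union> (range C) = S"
    and exhausting: "\<And>K. compact K \<Longrightarrow> K \<subseteq> S \<Longrightarrow> \<exists>N. \<forall>n\<ge>N. K \<subseteq> C n"
    using open_Union_compact_subsets[OF S] by blast
  define P where "P i r \<longleftrightarrow> (\<exists>g. uniform_limit (C i) (F \<circ> r) g sequentially)" for i r
  obtain k where "strict_mono k" and convergent_on_C: "\<And>i. P i (id \<circ> k)"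
  proof (rule subsequence_diagonalization_lemma[of P id])
    show "\<exists>k. strict_mono k \<and> P i (r \<circ> k)" for i and r :: "nat \<Rightarrow> nat"
    proof -
      obtain B where "\<forall>n. \<forall>z\<in>C i. norm (F n z) \<le> B"
        using bounded[OF C(1)[of i] C(2)[of i]] by blast
      then have "\<And>n z. z \<in> C i \<Longrightarrow> norm ((F \<circ> r) n z) \<le> B"
        by simp
      moreover have "\<exists>d>0. \<forall>n y. norm (x - y) < d \<longrightarrow> norm ((F \<circ> r) n x - (F \<circ> r) n y) < e"
        if "x \<in> C i" "e > 0" for x e
      proof -
        have "x \<in> S"
          using \<open>x \<in> C i\<close> C(2) by blast
        then obtain d where "d > 0" "\<forall>n y. norm (x - y) < d \<longrightarrow> norm (F n x - F n y) < e"
          using equicont \<open>e > 0\<close> by blast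
        then show ?thesis
          by auto
      qed
      ultimately obtain k g where "strict_mono k" "uniform_limit (C i) (F \<circ> r \<circ> k) g sequentially"
        using uniformly_convergent_subsequence_on_compact[OF C(1)] by blast
      then show ?thesis
        unfolding P_def o_assoc by blast
    qed
    show "P i (r \<circ> k2)" if "P i (r \<circ> k1)" "\<And>j. N \<le> j \<Longrightarrow> \<exists>j'. j \<le> j' \<and> k2 j = k1 j'"
      for i N and r k1 k2 :: "nat \<Rightarrow> nat"
    proof -
      obtain g where "uniform_limit (C i) (F \<circ> r \<circ> k1) g sequentially"
        using \<open>P i (r \<circ> k1)\<close> unfolding P_def o_assoc by blast
      from uniform_limit_eventual_subsequence[OF this that(2)]
      show ?thesis
        unfolding P_def o_assoc by blast
    qed
  qed (rule that)
  have "\<forall>i. \<exists>G. uniform_limit (C i) (F \<circ> k) G sequentially"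
    using convergent_on_C by (simp add: P_def)
  then obtain G where "\<forall>i. uniform_limit (C i) (F \<circ> k) (G i) sequentially"
    by (rule choice[THEN exE])
  then obtain g where g: "\<And>i. uniform_limit (C i) (F \<circ> k) g sequentially"
    using uniform_limit_common_limit by blast
  show thesis
  proof (rule that[OF \<open>strict_mono k\<close>])
    fix K assume "K \<subseteq> S" "compact K"
    then obtain N where "\<forall>n\<ge>N. K \<subseteq> C n"
      using exhausting by blast
    then show "uniform_limit K (F \<circ> k) g sequentially"
      using g by (blast intro: uniform_limit_on_subset)
  qed
qed

lemma Montel_holomorphic_n:
  fixes F :: "nat \<Rightarrow> complex ^ 'n \<Rightarrow> complex"
  assumes S: "open S" and hol: "\<And>n. holomorphic_n (F n) S"
    and bounded: "\<And>K. compact K \<Longrightarrow> K \<subseteq> S \<Longrightarrow> \<exists>B. \<forall>n. \<forall>z\<in>K. cmod (F n z) \<le> B"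
  obtains r g where "strict_mono r"
    "\<And>K. K \<subseteq> S \<Longrightarrow> compact K \<Longrightarrow> uniform_limit K (F \<circ> r) g sequentially"
proof (rule locally_uniform_convergent_subsequence[OF S])
  show "\<exists>B. \<forall>n. \<forall>z\<in>K. norm (F n z) \<le> B" if "compact K" "K \<subseteq> S" for K
    using bounded that by blast
  show "\<exists>d>0. \<forall>n y. norm (x - y) < d \<longrightarrow> norm (F n x - F n y) < e" if "x \<in> S" "e > 0" for x e
    by (rule holomorphic_n_equicontinuous_at[OF S hol bounded that])
qed (rule that)

theorem theorem10:
  fixes D :: "(complex ^ 'n) set" and k :: nat and c \<alpha> :: real
  assumes "open D" and "connected D" and "c > 0" and "\<alpha> > 1"
  shows "normal_family
           {f. holomorphic_n f D \<and>
               (\<forall>z\<in>D. Dk_sup k f z / (1 + cmod (f z) powr \<alpha>) > c)} D"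
  unfolding normal_family_def
proof (intro allI impI)
  fix f :: "nat \<Rightarrow> complex ^ 'n \<Rightarrow> complex"
  assume "\<forall>m. f m \<in> {f. holomorphic_n f D \<and> (\<forall>z\<in>D. Dk_sup k f z / (1 + cmod (f z) powr \<alpha>) > c)}"
  then have hol: "holomorphic_n (f m) D"
    and growth: "z \<in> D \<Longrightarrow> c * (1 + cmod (f m z) powr \<alpha>) < (\<Sum>j\<in>UNIV. cmod (partial_pow j k (f m) z))"
    for m z
    by (auto intro: sum_norm_partial_pow_gt_if_Dk_sup_gt)
  have bounded: "\<exists>B. \<forall>m. \<forall>z\<in>K. cmod (f m z) \<le> B" if K: "compact K" "K \<subseteq> D" for K
  proof -
    obtain B where "\<And>f z. holomorphic_n f D \<Longrightarrow>
        (\<And>z. z \<in> D \<Longrightarrow> c * (1 + cmod (f z) powr \<alpha>) < (\<Sum>j\<in>UNIV. cmod (partial_pow j k f z))) \<Longrightarrow>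
        z \<in> K \<Longrightarrow> cmod (f z) \<le> B"
      using uniform_bound_on_compact[where k = k, OF \<open>open D\<close> K \<open>c > 0\<close> \<open>\<alpha> > 1\<close>] by blast
    then show ?thesis
      using hol growth by blast
  qed
  obtain r g where "strict_mono r"
    and "\<And>K. K \<subseteq> D \<Longrightarrow> compact K \<Longrightarrow> uniform_limit K (f \<circ> r) g sequentially"
    using Montel_holomorphic_n[OF \<open>open D\<close> hol bounded] by blast
  then show "\<exists>r g. strict_mono r \<and>
      (\<forall>K. K \<subseteq> D \<and> compact K \<longrightarrow> uniform_limit K (\<lambda>m. f (r m)) g sequentially)"
    unfolding comp_def by blast
qed

end
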